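(* Let $n \ge 3$ and let $S$ be a $4$-cap free and $n$-cup free configuration with a fixed slope labeling $s$, and let $\alpha(p)=\alpha_1(p)$ and $\beta(p)=\alpha_2(p)$ be its $\alpha$-statistic. For any two distinct points $p, q$ with $\beta(p)=\beta(q)$: the edge joining $p$ and $q$ has label $1$, and $p<q$ if and only if $\alpha(p)<\alpha(q)$. For any two distinct points $p,q$ with $\alpha(p)=\alpha(q)$: the edge joining $p$ and $q$ has label $2$, and $p<q$ if and only if $\beta(p)<\beta(q)$.
   Context: A configuration is a finite set $S$ of points with a linear order $<$ and, for every $3$-element subset, an arbitrary assignment declaring it either a cap or a cup. Points $x_1<\cdots<x_a$ form an $a$-cup (resp. $a$-cap) if every consecutive triple $\{x_{i-1},x_i,x_{i+1}\}$, $1<i<a$, is assigned cup (resp. cap); $1$- and $2$-element sets are both caps and cups. The length of a cup is its number of points; a cup $x_1\cdots x_a$ with $a\ge 2$ ends with the point $x_a$ and the edge $x_{a-1}x_a$. An edge is a pair $x<y$, written $xy$. A slope labeling of a $4$-cap free configuration is an assignment $s(xy)\in\{1,2\}$ to every edge such that for any $x<y<z$, $s(xy)\le s(yz)$ implies $\{x,y,z\}$ is a $3$-cup. For $p\in S$, $\alpha(p)$ is the maximum length of a cup ending with $p$ and with an edge of label $1$ ($\alpha(p)=1$ if none), and $\beta(p)$ is the maximum length of a cup ending with $p$. *)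

theory Defs
  imports Main
begin

text \<open>A configuration: a finite set S of a linearly ordered type; the predicate
  iscup assigns to every 3-element subset T whether it is a cup (iscup T) or a
  cap (\<not> iscup T).\<close>

definition is_cup :: "('a::linorder set \<Rightarrow> bool) \<Rightarrow> 'a set \<Rightarrow> 'a list \<Rightarrow> bool" where
  "is_cup iscup S xs \<longleftrightarrow> sorted_wrt (<) xs \<and> set xs \<subseteq> S \<and>
     (\<forall>i. i + 2 < length xs \<longrightarrow> iscup {xs!i, xs!(i+1), xs!(i+2)})"

definition is_cap :: "('a::linorder set \<Rightarrow> bool) \<Rightarrow> 'a set \<Rightarrow> 'a list \<Rightarrow> bool" where
  "is_cap iscup S xs \<longleftrightarrow> sorted_wrt (<) xs \<and> set xs \<subseteq> S \<and>
     (\<forall>i. i + 2 < length xs \<longrightarrow> \<not> iscup {xs!i, xs!(i+1), xs!(i+2)})"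

definition cup_free :: "nat \<Rightarrow> ('a::linorder set \<Rightarrow> bool) \<Rightarrow> 'a set \<Rightarrow> bool" where
  "cup_free a iscup S \<longleftrightarrow> \<not> (\<exists>xs. is_cup iscup S xs \<and> length xs = a)"

definition cap_free :: "nat \<Rightarrow> ('a::linorder set \<Rightarrow> bool) \<Rightarrow> 'a set \<Rightarrow> bool" where
  "cap_free a iscup S \<longleftrightarrow> \<not> (\<exists>xs. is_cap iscup S xs \<and> length xs = a)"

definition slope_labeling ::
  "('a::linorder set \<Rightarrow> bool) \<Rightarrow> 'a set \<Rightarrow> ('a \<Rightarrow> 'a \<Rightarrow> nat) \<Rightarrow> bool" where
  "slope_labeling iscup S s \<longleftrightarrow>
     (\<forall>x\<in>S. \<forall>y\<in>S. x < y \<longrightarrow> s x y \<in> {1, 2}) \<and>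
     (\<forall>x\<in>S. \<forall>y\<in>S. \<forall>z\<in>S. x < y \<and> y < z \<and> s x y \<le> s y z \<longrightarrow> iscup {x, y, z})"

definition alpha_stat ::
  "('a::linorder set \<Rightarrow> bool) \<Rightarrow> 'a set \<Rightarrow> ('a \<Rightarrow> 'a \<Rightarrow> nat) \<Rightarrow> 'a \<Rightarrow> nat" where
  "alpha_stat iscup S s p = Max ({1} \<union> {length xs | xs. is_cup iscup S xs \<and> length xs \<ge> 2 \<and>
       last xs = p \<and> s (xs ! (length xs - 2)) p = 1})"

definition beta_stat ::
  "('a::linorder set \<Rightarrow> bool) \<Rightarrow> 'a set \<Rightarrow> 'a \<Rightarrow> nat" where
  "beta_stat iscup S p = Max {length xs | xs. is_cup iscup S xs \<and> xs \<noteq> [] \<and> last xs = p}"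

end

theory Submission
  imports Defs
begin

text \<open>Appending q to a cup ending with p keeps it a cup as soon as the label of its last edge
  is at most s p q. An edge pq of label 1 therefore extends every cup ending with an edge of
  label 1, so \<open>\<alpha>(p) < \<alpha>(q)\<close>, and an edge of label 2 extends every cup, so \<open>\<beta>(p) < \<beta>(q)\<close>.
  Since every label is 1 or 2, equality of one statistic determines the label and leaves the
  other statistic strictly increasing along the order.\<close>

lemma is_cup_length_le_card:
  assumes "is_cup iscup S xs" "finite S"
  shows "length xs \<le> card S"
proof -
  have "distinct xs"
    using assms(1) unfolding is_cup_def by (simp add: strict_sorted_iff)
  then have "length xs = card (set xs)"
    by (simp add: distinct_card)
  also have "\<dots> \<le> card S"
    using assms unfolding is_cup_def by (simp add: card_mono)
  finally show ?thesis .
qed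

lemma finite_cup_lengths:
  assumes "finite S"
  shows "finite {length xs | xs. is_cup iscup S xs \<and> P xs}"
  by (rule finite_subset[of _ "{..card S}"]) (auto dest: is_cup_length_le_card[OF _ assms])

lemma is_cup_append:
  assumes cup: "is_cup iscup S (ys @ [p])" and "q \<in> S" "p < q"
    and last_triple: "ys \<noteq> [] \<Longrightarrow> iscup {last ys, p, q}"
  shows "is_cup iscup S (ys @ [p, q])"
proof -
  have sorted: "sorted_wrt (<) (ys @ [p, q])"
  proof -
    have sorted_p: "sorted_wrt (<) (ys @ [p])"
      using cup unfolding is_cup_def by simp
    then have "\<forall>x \<in> set (ys @ [p]). x < q"
      using \<open>p < q\<close> by (auto simp: sorted_wrt_append)
    with sorted_p have "sorted_wrt (<) ((ys @ [p]) @ [q])"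
      by (simp only: sorted_wrt_append) simp
    then show ?thesis
      by simp
  qed
  have "iscup {(ys @ [p, q]) ! i, (ys @ [p, q]) ! (i + 1), (ys @ [p, q]) ! (i + 2)}"
    if i: "i + 2 < length (ys @ [p, q])" for i
  proof (cases "i + 2 < length (ys @ [p])")
    case True
    have "(ys @ [p, q]) ! j = (ys @ [p]) ! j" if "j < length (ys @ [p])" for j
      using that by (metis append.assoc append_Cons append_Nil nth_append)
    with True cup show ?thesis
      unfolding is_cup_def by simp
  next
    case False
    with i have "ys \<noteq> []" "i + 1 = length ys"
      by auto
    then obtain zs r where "ys = zs @ [r]" "i = length zs"
      by (cases ys rule: rev_cases) auto
    with last_triple show ?thesis
      by (simp add: nth_append)
  qed
  with sorted cup \<open>q \<in> S\<close> show ?thesis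
    unfolding is_cup_def by auto
qed

lemma is_cup_append_label:
  assumes lab: "slope_labeling iscup S s" and cup: "is_cup iscup S (ys @ [p])"
    and "q \<in> S" "p < q" and le: "ys \<noteq> [] \<Longrightarrow> s (last ys) p \<le> s p q"
  shows "is_cup iscup S (ys @ [p, q])"
proof (rule is_cup_append[OF cup \<open>q \<in> S\<close> \<open>p < q\<close>])
  assume "ys \<noteq> []"
  with cup have "last ys \<in> S" "p \<in> S" "last ys < p"
    unfolding is_cup_def by (auto simp: sorted_wrt_append)
  with lab le[OF \<open>ys \<noteq> []\<close>] \<open>q \<in> S\<close> \<open>p < q\<close> show "iscup {last ys, p, q}"
    unfolding slope_labeling_def by blast
qed

lemma length_le_alpha_stat:
  assumes "finite S" "s p q = 1" "is_cup iscup S (ys @ [p, q])"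
  shows "length ys + 2 \<le> alpha_stat iscup S s q"
  unfolding alpha_stat_def
  by (rule Max_ge) (use assms finite_cup_lengths[OF \<open>finite S\<close>] in
      \<open>auto intro!: exI[of _ "ys @ [p, q]"] simp: nth_append\<close>)

lemma alpha_stat_cases:
  assumes "finite S"
  obtains "alpha_stat iscup S s p = 1"
  | ys where "is_cup iscup S (ys @ [p])" "ys \<noteq> []" "s (last ys) p = 1"
      "alpha_stat iscup S s p = length ys + 1"
proof -
  have "alpha_stat iscup S s p \<in> {1} \<union> {length xs | xs. is_cup iscup S xs \<and> length xs \<ge> 2 \<and>
       last xs = p \<and> s (xs ! (length xs - 2)) p = 1}"
    unfolding alpha_stat_def
    by (rule Max_in) (use finite_cup_lengths[OF assms] in auto)
  then consider "alpha_stat iscup S s p = 1"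
    | xs where "is_cup iscup S xs" "length xs \<ge> 2" "last xs = p"
      "s (xs ! (length xs - 2)) p = 1" "alpha_stat iscup S s p = length xs"
    by auto
  then show ?thesis
  proof cases
    case 1
    then show ?thesis
      by (rule that(1))
  next
    case (2 xs)
    define ys where "ys = butlast xs"
    have "xs \<noteq> []"
      using \<open>length xs \<ge> 2\<close> by auto
    then have xs: "xs = ys @ [p]"
      using \<open>last xs = p\<close> unfolding ys_def by (metis append_butlast_last_id)
    with \<open>length xs \<ge> 2\<close> have "ys \<noteq> []"
      by auto
    with xs have "xs ! (length xs - 2) = last ys"
      by (simp add: nth_append last_conv_nth)
    with 2 xs \<open>ys \<noteq> []\<close> show ?thesis
      using that(2) by simp
  qed
qed

lemma length_le_beta_stat:
  assumes "finite S" "is_cup iscup S xs" "xs \<noteq> []" "last xs = q"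
  shows "length xs \<le> beta_stat iscup S q"
  unfolding beta_stat_def
  by (rule Max_ge) (use assms finite_cup_lengths[OF \<open>finite S\<close>] in auto)

lemma beta_stat_attained:
  assumes "finite S" "p \<in> S"
  obtains ys where "is_cup iscup S (ys @ [p])" "beta_stat iscup S p = length ys + 1"
proof -
  let ?B = "{length xs | xs. is_cup iscup S xs \<and> xs \<noteq> [] \<and> last xs = p}"
  have "is_cup iscup S [p]"
    using assms(2) unfolding is_cup_def by simp
  then have "1 \<in> ?B"
    by (intro CollectI exI[of _ "[p]"]) simp
  then have "Max ?B \<in> ?B"
    by (intro Max_in finite_cup_lengths[OF assms(1)]) blast
  then obtain xs where xs: "is_cup iscup S xs" "xs \<noteq> []" "last xs = p"
    and beta: "beta_stat iscup S p = length xs"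
    unfolding beta_stat_def by blast
  define ys where "ys = butlast xs"
  have "xs = ys @ [p]"
    using xs unfolding ys_def by (metis append_butlast_last_id)
  with xs beta show ?thesis
    by (intro that[of ys]) simp_all
qed

lemma alpha_stat_less_if_label_1:
  assumes "finite S" "slope_labeling iscup S s" "p \<in> S" "q \<in> S" "p < q" "s p q = 1"
  shows "alpha_stat iscup S s p < alpha_stat iscup S s q"
  using \<open>finite S\<close>
proof (cases rule: alpha_stat_cases[where p = p and iscup = iscup and s = s])
  case 1
  have "is_cup iscup S ([] @ [p, q])"
    using assms unfolding is_cup_def by simp
  then have "length ([] :: 'a list) + 2 \<le> alpha_stat iscup S s q"
    by (rule length_le_alpha_stat[where s = s, OF \<open>finite S\<close> \<open>s p q = 1\<close>])
  with 1 show ?thesis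
    by simp
next
  case (2 ys)
  then have "is_cup iscup S (ys @ [p, q])"
    using is_cup_append_label[OF \<open>slope_labeling iscup S s\<close> _ \<open>q \<in> S\<close> \<open>p < q\<close>]
      \<open>s p q = 1\<close> by simp
  then have "length ys + 2 \<le> alpha_stat iscup S s q"
    by (rule length_le_alpha_stat[where s = s, OF \<open>finite S\<close> \<open>s p q = 1\<close>])
  with 2 show ?thesis
    by simp
qed

lemma beta_stat_less_if_label_2:
  assumes fin: "finite S" and lab: "slope_labeling iscup S s"
    and "p \<in> S" "q \<in> S" "p < q" "s p q = 2"
  shows "beta_stat iscup S p < beta_stat iscup S q"
proof -
  obtain ys where cup: "is_cup iscup S (ys @ [p])" and beta: "beta_stat iscup S p = length ys + 1"
    using beta_stat_attained[OF fin \<open>p \<in> S\<close>] .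
  have "s (last ys) p \<le> s p q" if "ys \<noteq> []"
  proof -
    from cup that have "last ys \<in> S" "last ys < p"
      unfolding is_cup_def by (auto simp: sorted_wrt_append)
    with lab \<open>p \<in> S\<close> \<open>s p q = 2\<close> show ?thesis
      unfolding slope_labeling_def by fastforce
  qed
  then have "is_cup iscup S (ys @ [p, q])"
    using is_cup_append_label[OF lab cup \<open>q \<in> S\<close> \<open>p < q\<close>] by blast
  from length_le_beta_stat[OF fin this] beta show ?thesis
    by simp
qed

lemma slope_labeling_cases:
  assumes "slope_labeling iscup S s" "p \<in> S" "q \<in> S" "p < q"
  obtains "s p q = 1" | "s p q = 2"
  using assms unfolding slope_labeling_def by blast

lemma equal_beta_stat_ordered:
  assumes fin: "finite S" and lab: "slope_labeling iscup S s" and pq: "p \<in> S" "q \<in> S" "p < q"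
    and "beta_stat iscup S p = beta_stat iscup S q"
  shows "s p q = 1 \<and> alpha_stat iscup S s p < alpha_stat iscup S s q"
proof (cases rule: slope_labeling_cases[OF lab pq])
  case 1
  then show ?thesis
    using alpha_stat_less_if_label_1[OF fin lab pq] by simp
next
  case 2
  then have "beta_stat iscup S p < beta_stat iscup S q"
    by (rule beta_stat_less_if_label_2[OF fin lab pq])
  with \<open>beta_stat iscup S p = beta_stat iscup S q\<close> show ?thesis
    by simp
qed

lemma equal_alpha_stat_ordered:
  assumes fin: "finite S" and lab: "slope_labeling iscup S s" and pq: "p \<in> S" "q \<in> S" "p < q"
    and "alpha_stat iscup S s p = alpha_stat iscup S s q"
  shows "s p q = 2 \<and> beta_stat iscup S p < beta_stat iscup S q"
proof (cases rule: slope_labeling_cases[OF lab pq])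
  case 1
  then have "alpha_stat iscup S s p < alpha_stat iscup S s q"
    by (rule alpha_stat_less_if_label_1[OF fin lab pq])
  with \<open>alpha_stat iscup S s p = alpha_stat iscup S s q\<close> show ?thesis
    by simp
next
  case 2
  then show ?thesis
    using beta_stat_less_if_label_2[OF fin lab pq] by simp
qed

lemma equal_beta_stat:
  assumes fin: "finite S" and lab: "slope_labeling iscup S s" and "p \<in> S" "q \<in> S" "p \<noteq> q"
    and eq: "beta_stat iscup S p = beta_stat iscup S q"
  shows "s (min p q) (max p q) = 1 \<and> (p < q \<longleftrightarrow> alpha_stat iscup S s p < alpha_stat iscup S s q)"
proof (cases "p < q")
  case True
  with equal_beta_stat_ordered[OF fin lab \<open>p \<in> S\<close> \<open>q \<in> S\<close> True eq] show ?thesis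
    by simp
next
  case False
  with \<open>p \<noteq> q\<close> have "q < p"
    by simp
  with False equal_beta_stat_ordered[OF fin lab \<open>q \<in> S\<close> \<open>p \<in> S\<close> this eq[symmetric]] show ?thesis
    by (simp add: min_absorb2 max_absorb1)
qed

lemma equal_alpha_stat:
  assumes fin: "finite S" and lab: "slope_labeling iscup S s" and "p \<in> S" "q \<in> S" "p \<noteq> q"
    and eq: "alpha_stat iscup S s p = alpha_stat iscup S s q"
  shows "s (min p q) (max p q) = 2 \<and> (p < q \<longleftrightarrow> beta_stat iscup S p < beta_stat iscup S q)"
proof (cases "p < q")
  case True
  with equal_alpha_stat_ordered[OF fin lab \<open>p \<in> S\<close> \<open>q \<in> S\<close> True eq] show ?thesis
    by simp
next
  case False
  with \<open>p \<noteq> q\<close> have "q < p"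
    by simp
  with False equal_alpha_stat_ordered[OF fin lab \<open>q \<in> S\<close> \<open>p \<in> S\<close> this eq[symmetric]] show ?thesis
    by (simp add: min_absorb2 max_absorb1)
qed

theorem corollary4p3:
  fixes S :: "'a::linorder set" and iscup :: "'a set \<Rightarrow> bool"
    and s :: "'a \<Rightarrow> 'a \<Rightarrow> nat" and n :: nat
  assumes "n \<ge> 3" and "finite S"
    and "cap_free 4 iscup S" and "cup_free n iscup S"
    and "slope_labeling iscup S s"
  shows "(\<forall>p\<in>S. \<forall>q\<in>S. p \<noteq> q \<and> beta_stat iscup S p = beta_stat iscup S q \<longrightarrow>
            s (min p q) (max p q) = 1 \<and>
            (p < q \<longleftrightarrow> alpha_stat iscup S s p < alpha_stat iscup S s q)) \<and>
         (\<forall>p\<in>S. \<forall>q\<in>S. p \<noteq> q \<and> alpha_stat iscup S s p = alpha_stat iscup S s q \<longrightarrow>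
            s (min p q) (max p q) = 2 \<and>
            (p < q \<longleftrightarrow> beta_stat iscup S p < beta_stat iscup S q))"
  using equal_beta_stat[OF assms(2,5)] equal_alpha_stat[OF assms(2,5)] by blast

end
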